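(* Let $(\mathbf{L},\mathbf{R})\in\mathcal{P}_{\mathsf N}$ be centered (so both matrices have the same number $m$ of columns), and let $f:\{0,1\}^m\to\{0,1\}^m$. Then $f$ is a contraction map for $(\mathbf{L},\mathbf{R})$ if and only if $f$ is an inclusion dominance map for $(\mathbf{L},\mathbf{R})$. In particular, a centered pair admits a contraction map if and only if it admits an inclusion dominance map.
   Context: $\mathcal{P}_{\mathsf N}$ denotes the set of pairs $(\mathbf{L},\mathbf{R})$ of $(0,1)$-matrices, $\mathbf{L}$ of size $(\mathsf N+1)\times m_L$ and $\mathbf{R}$ of size $(\mathsf N+1)\times m_R$, such that some index $p\in[\mathsf N+1]$ has row $p$ of $\mathbf{L}$ and row $p$ of $\mathbf{R}$ both zero. $\mathbf{A}_{(i)}$ denotes the $i$-th row of $\mathbf{A}$; $e$ the all-ones row vector; $|v|=\sum_k|v_k|$; $|x-x'|$ the Hamming distance; for vectors, $v\le w$ means componentwise; $u^T$ is the transpose (column vector). The pair is balanced if $|\mathbf{L}_{(i)}|=|\mathbf{R}_{(i)}|$ for all $i$, and centered if it is balanced and for some $i$ we have $\mathbf{L}_{(i)}=e$ and $\mathbf{R}_{(i)}=e$. A contraction map is $f:\{0,1\}^{m_L}\to\{0,1\}^{m_R}$ with $f(\mathbf{L}_{(i)})=\mathbf{R}_{(i)}$ for all $i\in[\mathsf N+1]$ and $|x-x'|\ge|f(x)-f(x')|$ for all $x,x'$. A dominance map is $f:\{0,1\}^{m_L}\to\{0,1\}^{m_R}$ such that for all $u$, $|u|=|f(u)|$ and $\mathbf{L}u^T\le\mathbf{R}f(u)^T$.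 An inclusion dominance map is a dominance map $f$ such that $u'\le u$ implies $f(u')\le f(u)$. *)

theory Defs
  imports Main
begin

text \<open>Binary vectors in {0,1}^m are bool lists of length m (True = 1).
  A (0,1)-matrix with N+1 rows and m columns is given by its rows
  A :: nat \<Rightarrow> bool list, row i (for i = 0..N) being A i, of length m.\<close>

definition bvec :: "nat \<Rightarrow> bool list set" where
  "bvec m = {x. length x = m}"

definition wt :: "bool list \<Rightarrow> nat" where
  "wt x = length (filter id x)"

definition hdist :: "bool list \<Rightarrow> bool list \<Rightarrow> nat" where
  "hdist x y = length (filter id (map2 (\<noteq>) x y))"

definition ip :: "bool list \<Rightarrow> bool list \<Rightarrow> nat" where
  "ip x y = length (filter id (map2 (\<and>) x y))"

definition vle :: "bool list \<Rightarrow> bool list \<Rightarrow> bool" where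
  "vle x y = list_all2 (\<le>) x y"

definition inP :: "nat \<Rightarrow> nat \<Rightarrow> nat \<Rightarrow> (nat \<Rightarrow> bool list) \<Rightarrow> (nat \<Rightarrow> bool list) \<Rightarrow> bool" where
  "inP N mL mR L R \<longleftrightarrow>
     (\<forall>i\<le>N. length (L i) = mL \<and> length (R i) = mR) \<and>
     (\<exists>p\<le>N. L p = replicate mL False \<and> R p = replicate mR False)"

definition balanced :: "nat \<Rightarrow> (nat \<Rightarrow> bool list) \<Rightarrow> (nat \<Rightarrow> bool list) \<Rightarrow> bool" where
  "balanced N L R \<longleftrightarrow> (\<forall>i\<le>N. wt (L i) = wt (R i))"

definition centered :: "nat \<Rightarrow> nat \<Rightarrow> nat \<Rightarrow> (nat \<Rightarrow> bool list) \<Rightarrow> (nat \<Rightarrow> bool list) \<Rightarrow> bool" where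
  "centered N mL mR L R \<longleftrightarrow> balanced N L R \<and>
     (\<exists>i\<le>N. L i = replicate mL True \<and> R i = replicate mR True)"

definition contraction_map :: "nat \<Rightarrow> nat \<Rightarrow> nat \<Rightarrow> (nat \<Rightarrow> bool list) \<Rightarrow> (nat \<Rightarrow> bool list)
    \<Rightarrow> (bool list \<Rightarrow> bool list) \<Rightarrow> bool" where
  "contraction_map N mL mR L R f \<longleftrightarrow>
     (\<forall>x\<in>bvec mL. f x \<in> bvec mR) \<and>
     (\<forall>i\<le>N. f (L i) = R i) \<and>
     (\<forall>x\<in>bvec mL. \<forall>x'\<in>bvec mL. hdist (f x) (f x') \<le> hdist x x')"

definition dominance_map :: "nat \<Rightarrow> nat \<Rightarrow> nat \<Rightarrow> (nat \<Rightarrow> bool list) \<Rightarrow> (nat \<Rightarrow> bool list)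
    \<Rightarrow> (bool list \<Rightarrow> bool list) \<Rightarrow> bool" where
  "dominance_map N mL mR L R f \<longleftrightarrow>
     (\<forall>u\<in>bvec mL. f u \<in> bvec mR \<and> wt u = wt (f u) \<and>
        (\<forall>i\<le>N. ip (L i) u \<le> ip (R i) (f u)))"

definition inclusion_dominance_map :: "nat \<Rightarrow> nat \<Rightarrow> nat \<Rightarrow> (nat \<Rightarrow> bool list) \<Rightarrow> (nat \<Rightarrow> bool list)
    \<Rightarrow> (bool list \<Rightarrow> bool list) \<Rightarrow> bool" where
  "inclusion_dominance_map N mL mR L R f \<longleftrightarrow>
     dominance_map N mL mR L R f \<and>
     (\<forall>u\<in>bvec mL. \<forall>u'\<in>bvec mL. vle u' u \<longrightarrow> vle (f u') (f u))"

end

theory Submission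
  imports Defs
begin

text \<open>Write \<open>0\<close> and \<open>1\<close> for the constant vectors. For vectors of equal length,
  \<open>|x - y| = |x| + |y| - 2 x\<cdot>y\<close>, and \<open>|x - y| \<ge> |y| - |x|\<close> with equality exactly when
  \<open>x \<le> y\<close>. A contraction \<open>f\<close> of a centered pair fixes \<open>0\<close> and \<open>1\<close>, so comparing
  with them shows that \<open>f\<close> preserves weights; then the first identity turns
  \<open>|f u - R\<^sub>i| \<le> |u - L\<^sub>i|\<close> into \<open>L\<^sub>i\<cdot>u \<le> R\<^sub>i\<cdot>f u\<close>, and the equality case
  of the second makes \<open>f\<close> monotone. Conversely, for a monotone weight-preserving
  \<open>f\<close> we have \<open>|x - x'| = |x \<or> x'| - |x \<and> x'|\<close>, while \<open>f x\<close> and \<open>f x'\<close>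
  lie between \<open>f (x \<and> x')\<close> and \<open>f (x \<or> x')\<close>, which have the same weights;
  and \<open>f L\<^sub>i = R\<^sub>i\<close> because \<open>R\<^sub>i\<cdot>f L\<^sub>i \<ge> L\<^sub>i\<cdot>L\<^sub>i = |R\<^sub>i| = |f L\<^sub>i|\<close>.\<close>

lemma wt_le_length: "wt x \<le> length x"
  by (simp add: wt_def)

lemma wt_replicate_True: "wt (replicate n True) = n"
  by (induction n) (auto simp: wt_def)

lemma hdist_replicate_False: "hdist x (replicate (length x) False) = wt x"
  by (induction x) (auto simp: hdist_def wt_def)

lemma hdist_replicate_True: "hdist x (replicate (length x) True) = length x - wt x"
proof (induction x)
  case (Cons b x)
  then show ?case
    using wt_le_length[of x] by (auto simp: hdist_def wt_def Suc_diff_le)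
qed (simp add: hdist_def wt_def)

lemma hdist_add_ip:
  "length x = length y \<Longrightarrow> hdist x y + 2 * ip x y = wt x + wt y"
  by (induction x y rule: list_induct2) (auto simp: hdist_def wt_def ip_def)

lemma wt_le_hdist_add_wt:
  "length x = length y \<Longrightarrow> wt y \<le> hdist x y + wt x"
  by (induction x y rule: list_induct2) (auto simp: hdist_def wt_def)

lemma vle_iff_hdist_add_wt:
  "length x = length y \<Longrightarrow> vle x y \<longleftrightarrow> hdist x y + wt x = wt y"
proof (induction x y rule: list_induct2)
  case (Cons a x b y)
  then show ?case
    using wt_le_hdist_add_wt[OF Cons.hyps] by (auto simp: hdist_def wt_def vle_def)
qed (simp add: hdist_def wt_def vle_def)

lemma ip_self: "ip x x = wt x"
  by (induction x) (auto simp: ip_def wt_def)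

lemma ip_le_wt_left: "length x = length y \<Longrightarrow> ip x y \<le> wt x"
  by (induction x y rule: list_induct2) (auto simp: wt_def ip_def)

lemma ip_le_wt_right: "length x = length y \<Longrightarrow> ip x y \<le> wt y"
  by (induction x y rule: list_induct2) (auto simp: wt_def ip_def)

lemma eq_if_ip_eq_wt:
  "length x = length y \<Longrightarrow> ip x y = wt x \<Longrightarrow> ip x y = wt y \<Longrightarrow> x = y"
proof (induction x y rule: list_induct2)
  case (Cons a x b y)
  then show ?case
    using ip_le_wt_left[OF Cons.hyps] ip_le_wt_right[OF Cons.hyps]
    by (cases a; cases b) (auto simp: wt_def ip_def)
qed simp

lemma vle_meet_left: "length x = length y \<Longrightarrow> vle (map2 (\<and>) x y) x"
  by (induction x y rule: list_induct2) (auto simp: vle_def)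

lemma vle_meet_right: "length x = length y \<Longrightarrow> vle (map2 (\<and>) x y) y"
  by (induction x y rule: list_induct2) (auto simp: vle_def)

lemma vle_join_left: "length x = length y \<Longrightarrow> vle x (map2 (\<or>) x y)"
  by (induction x y rule: list_induct2) (auto simp: vle_def)

lemma vle_join_right: "length x = length y \<Longrightarrow> vle y (map2 (\<or>) x y)"
  by (induction x y rule: list_induct2) (auto simp: vle_def)

lemma hdist_add_wt_meet:
  "length x = length y \<Longrightarrow> hdist x y + wt (map2 (\<and>) x y) = wt (map2 (\<or>) x y)"
  by (induction x y rule: list_induct2) (auto simp: hdist_def wt_def)

lemma hdist_add_wt_le_if_between:
  assumes "length x = length y" "length z = length x" "length w = length x"
    and "vle z x" "vle z y" "vle x w" "vle y w"
  shows "hdist x y + wt z \<le> wt w"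
  using assms
proof (induction x y arbitrary: z w rule: list_induct2)
  case Nil
  then show ?case by (simp add: hdist_def wt_def)
next
  case (Cons a x b y)
  obtain c z' where z: "z = c # z'" using Cons.prems(1) by (cases z) auto
  obtain d w' where w: "w = d # w'" using Cons.prems(2) by (cases w) auto
  have "hdist x y + wt z' \<le> wt w'"
    using Cons.prems by (intro Cons.IH) (auto simp: z w vle_def)
  moreover have "c \<le> a" "c \<le> b" "a \<le> d" "b \<le> d"
    using Cons.prems by (auto simp: z w vle_def)
  ultimately show ?case
    by (cases a; cases b; cases c; cases d) (auto simp: z w hdist_def wt_def)
qed

lemma ip_le_ip_if_hdist_le:
  assumes "length x = length u" "length y = length v"
    and "wt x = wt y" "wt u = wt v" "hdist y v \<le> hdist x u"
  shows "ip x u \<le> ip y v"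
  using assms hdist_add_ip[of x u] hdist_add_ip[of y v] by linarith

lemma wt_eq_if_nonexpansive_fixing_constants:
  assumes maps: "\<And>x. x \<in> bvec m \<Longrightarrow> f x \<in> bvec m"
    and nonexp: "\<And>x y. x \<in> bvec m \<Longrightarrow> y \<in> bvec m \<Longrightarrow> hdist (f x) (f y) \<le> hdist x y"
    and fix0: "f (replicate m False) = replicate m False"
    and fix1: "f (replicate m True) = replicate m True"
    and u: "u \<in> bvec m"
  shows "wt (f u) = wt u"
proof -
  have len: "length u = m" "length (f u) = m"
    using u maps[OF u] by (auto simp: bvec_def)
  have "hdist (f u) (f (replicate m False)) \<le> hdist u (replicate m False)"
    using nonexp u by (simp add: bvec_def)
  then have "wt (f u) \<le> wt u"
    using fix0 len hdist_replicate_False[of u] hdist_replicate_False[of "f u"] by simp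
  moreover have "hdist (f u) (f (replicate m True)) \<le> hdist u (replicate m True)"
    using nonexp u by (simp add: bvec_def)
  then have "m - wt (f u) \<le> m - wt u"
    using fix1 len hdist_replicate_True[of u] hdist_replicate_True[of "f u"] by simp
  then have "wt u \<le> wt (f u)"
    using wt_le_length[of u] wt_le_length[of "f u"] len by linarith
  ultimately show ?thesis by simp
qed

lemma mono_if_nonexpansive_wt_preserving:
  assumes maps: "\<And>x. x \<in> bvec m \<Longrightarrow> f x \<in> bvec m"
    and nonexp: "\<And>x y. x \<in> bvec m \<Longrightarrow> y \<in> bvec m \<Longrightarrow> hdist (f x) (f y) \<le> hdist x y"
    and wt_f: "\<And>x. x \<in> bvec m \<Longrightarrow> wt (f x) = wt x"
    and u: "u \<in> bvec m" and u': "u' \<in> bvec m" and "vle u' u"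
  shows "vle (f u') (f u)"
proof -
  have len: "length u = m" "length u' = m" "length (f u) = m" "length (f u') = m"
    using u u' maps[OF u] maps[OF u'] by (auto simp: bvec_def)
  have "hdist u' u + wt u' = wt u"
    using \<open>vle u' u\<close> len vle_iff_hdist_add_wt[of u' u] by simp
  moreover have "hdist (f u') (f u) \<le> hdist u' u"
    using nonexp[OF u' u] .
  moreover have "wt (f u) \<le> hdist (f u') (f u) + wt (f u')"
    using len wt_le_hdist_add_wt[of "f u'" "f u"] by simp
  ultimately have "hdist (f u') (f u) + wt (f u') = wt (f u)"
    using wt_f[OF u] wt_f[OF u'] by linarith
  then show ?thesis
    using len vle_iff_hdist_add_wt[of "f u'" "f u"] by simp
qed

lemma nonexpansive_if_mono_wt_preserving:
  assumes maps: "\<And>x. x \<in> bvec m \<Longrightarrow> f x \<in> bvec m"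
    and mono: "\<And>u u'. u \<in> bvec m \<Longrightarrow> u' \<in> bvec m \<Longrightarrow> vle u' u \<Longrightarrow> vle (f u') (f u)"
    and wt_f: "\<And>x. x \<in> bvec m \<Longrightarrow> wt (f x) = wt x"
    and x: "x \<in> bvec m" and y: "y \<in> bvec m"
  shows "hdist (f x) (f y) \<le> hdist x y"
proof -
  define z where "z = map2 (\<and>) x y"
  define w where "w = map2 (\<or>) x y"
  have len: "length x = m" "length y = m"
    using x y by (auto simp: bvec_def)
  have z_in: "z \<in> bvec m" and w_in: "w \<in> bvec m"
    using len by (auto simp: z_def w_def bvec_def)
  have "vle z x" "vle z y" "vle x w" "vle y w"
    using len vle_meet_left vle_meet_right vle_join_left vle_join_right
    by (auto simp: z_def w_def)
  then have "hdist (f x) (f y) + wt (f z) \<le> wt (f w)"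
    using maps x y z_in w_in mono[OF x z_in] mono[OF y z_in] mono[OF w_in x] mono[OF w_in y]
    by (intro hdist_add_wt_le_if_between) (auto simp: bvec_def)
  moreover have "hdist x y + wt z = wt w"
    using len hdist_add_wt_meet by (simp add: z_def w_def)
  ultimately show ?thesis
    using wt_f[OF z_in] wt_f[OF w_in] by linarith
qed

lemma centered_widths_eq:
  assumes "centered N mL mR L R"
  shows "mR = mL"
proof -
  obtain i where "i \<le> N" "L i = replicate mL True" "R i = replicate mR True"
    using assms by (auto simp: centered_def)
  then show ?thesis
    using assms wt_replicate_True by (metis centered_def balanced_def)
qed

lemma contraction_map_imp_inclusion_dominance_map:
  assumes P: "inP N m m L R" and C: "centered N m m L R"
    and f: "contraction_map N m m L R f"
  shows "inclusion_dominance_map N m m L R f"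
proof -
  have maps: "\<And>x. x \<in> bvec m \<Longrightarrow> f x \<in> bvec m"
    and rows: "\<And>i. i \<le> N \<Longrightarrow> f (L i) = R i"
    and nonexp: "\<And>x y. x \<in> bvec m \<Longrightarrow> y \<in> bvec m \<Longrightarrow> hdist (f x) (f y) \<le> hdist x y"
    using f by (auto simp: contraction_map_def)
  have L_in: "\<And>i. i \<le> N \<Longrightarrow> L i \<in> bvec m" and len_R: "\<And>i. i \<le> N \<Longrightarrow> length (R i) = m"
    using P by (auto simp: inP_def bvec_def)
  have bal: "\<And>i. i \<le> N \<Longrightarrow> wt (L i) = wt (R i)"
    using C by (simp add: centered_def balanced_def)
  obtain p where "p \<le> N" "L p = replicate m False" "R p = replicate m False"
    using P by (auto simp: inP_def)
  then have fix0: "f (replicate m False) = replicate m False"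
    using rows by metis
  obtain q where "q \<le> N" "L q = replicate m True" "R q = replicate m True"
    using C by (auto simp: centered_def)
  then have fix1: "f (replicate m True) = replicate m True"
    using rows by metis
  have wt_f: "\<And>u. u \<in> bvec m \<Longrightarrow> wt (f u) = wt u"
    using wt_eq_if_nonexpansive_fixing_constants[OF maps nonexp fix0 fix1] .
  have "ip (L i) u \<le> ip (R i) (f u)" if "i \<le> N" "u \<in> bvec m" for i u
    using that maps[of u] nonexp[OF L_in[OF \<open>i \<le> N\<close>] \<open>u \<in> bvec m\<close>] rows L_in len_R bal wt_f
    by (intro ip_le_ip_if_hdist_le) (auto simp: bvec_def)
  then show ?thesis
    unfolding inclusion_dominance_map_def dominance_map_def
    using maps wt_f mono_if_nonexpansive_wt_preserving[OF maps nonexp wt_f] by auto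
qed

lemma inclusion_dominance_map_imp_contraction_map:
  assumes P: "inP N m m L R" and bal: "balanced N L R"
    and f: "inclusion_dominance_map N m m L R f"
  shows "contraction_map N m m L R f"
proof -
  have maps: "\<And>x. x \<in> bvec m \<Longrightarrow> f x \<in> bvec m"
    and wt_f: "\<And>x. x \<in> bvec m \<Longrightarrow> wt (f x) = wt x"
    and dominates: "\<And>x i. x \<in> bvec m \<Longrightarrow> i \<le> N \<Longrightarrow> ip (L i) x \<le> ip (R i) (f x)"
    and mono: "\<And>u u'. u \<in> bvec m \<Longrightarrow> u' \<in> bvec m \<Longrightarrow> vle u' u \<Longrightarrow> vle (f u') (f u)"
    using f by (auto simp: inclusion_dominance_map_def dominance_map_def)
  have L_in: "\<And>i. i \<le> N \<Longrightarrow> L i \<in> bvec m" and len_R: "\<And>i. i \<le> N \<Longrightarrow> length (R i) = m"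
    using P by (auto simp: inP_def bvec_def)
  have rows: "f (L i) = R i" if i: "i \<le> N" for i
  proof -
    have len: "length (R i) = length (f (L i))"
      using maps[OF L_in[OF i]] len_R[OF i] by (simp add: bvec_def)
    have "wt (R i) \<le> ip (R i) (f (L i))"
      using dominates[OF L_in[OF i] i] ip_self[of "L i"] bal i by (simp add: balanced_def)
    then have "ip (R i) (f (L i)) = wt (R i)"
      using ip_le_wt_left[OF len] by (rule antisym[rotated])
    moreover have "wt (f (L i)) = wt (R i)"
      using wt_f[OF L_in[OF i]] bal i by (simp add: balanced_def)
    ultimately have "R i = f (L i)"
      by (intro eq_if_ip_eq_wt[OF len]) simp_all
    then show ?thesis ..
  qed
  show ?thesis
    unfolding contraction_map_def
    using maps rows nonexpansive_if_mono_wt_preserving[OF maps mono wt_f] by blast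
qed

theorem theorem2:
  fixes N mL mR :: nat and L R :: "nat \<Rightarrow> bool list" and f :: "bool list \<Rightarrow> bool list"
  assumes "inP N mL mR L R" and "centered N mL mR L R"
  shows "(contraction_map N mL mR L R f \<longleftrightarrow> inclusion_dominance_map N mL mR L R f)
       \<and> ((\<exists>g. contraction_map N mL mR L R g) \<longleftrightarrow> (\<exists>g. inclusion_dominance_map N mL mR L R g))"
proof -
  have "mR = mL"
    using centered_widths_eq[OF assms(2)] .
  then have "contraction_map N mL mR L R g \<longleftrightarrow> inclusion_dominance_map N mL mR L R g" for g
    using assms contraction_map_imp_inclusion_dominance_map
      inclusion_dominance_map_imp_contraction_map centered_def by blast
  then show ?thesis by blast
qed

end
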